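(* Let $n\ge2$ and let $A\in\mathbb{R}^{n\times n}$ be conditionally negative definite. Let $\overline{A}=\frac12(A+A^T)$ and let $\lambda_2$ be the second largest eigenvalue (counting multiplicity) of $$D=\overline{A}-\frac1n\overline{A}\mathbf{1}\mathbf{1}^T-\frac1n\mathbf{1}\mathbf{1}^T\overline{A}+\frac{\mathbf{1}^TA\mathbf{1}}{n^2}\mathbf{1}\mathbf{1}^T.$$ Then $$\max_{\mathbf{x}\in\mathbb{R}^n,\ \mathbf{x}^T\mathbf{1}=0,\ \mathbf{x}\ne\mathbf{0}}\frac{\mathbf{x}^TA\mathbf{x}}{\mathbf{x}^T\mathbf{x}}=\lambda_2<0.$$
   Context: $\mathbf{1}\in\mathbb{R}^n$ is the all-ones vector. $A$ is conditionally negative definite if $\mathbf{y}^TA\mathbf{y}<0$ for all nonzero $\mathbf{y}\in\mathbb{R}^n$ with $\mathbf{1}^T\mathbf{y}=0$. *)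

theory Defs
  imports "Jordan_Normal_Form.Char_Poly" "HOL-Library.Multiset"
begin

definition ones_vec :: "nat \<Rightarrow> real vec" where
  "ones_vec n = vec n (\<lambda>_. 1)"

definition ones_mat :: "nat \<Rightarrow> real mat" where
  "ones_mat n = mat n n (\<lambda>_. 1)"

definition cond_neg_def :: "nat \<Rightarrow> real mat \<Rightarrow> bool" where
  "cond_neg_def n A \<longleftrightarrow> (\<forall>y \<in> carrier_vec n.
      ones_vec n \<bullet> y = 0 \<and> y \<noteq> 0\<^sub>v n \<longrightarrow> y \<bullet> (A *\<^sub>v y) < 0)"

text \<open>Eigenvalues counted with multiplicity: the roots of the characteristic polynomial,
  listed in decreasing order (for real symmetric matrices these are all n eigenvalues).\<close>
definition eigenvalues_desc :: "real mat \<Rightarrow> real list" where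
  "eigenvalues_desc M = rev (sorted_list_of_multiset (proots (char_poly M)))"

end

theory Submission
  imports Defs "HOL-Analysis.Function_Topology"
begin

(* D is the double centering P Abar P of the symmetric part of A, where P = I - 1 1^T / n.
   Hence D is symmetric, D 1 = 0 and x^T D x = x^T A x for x orthogonal to 1, so D is negative
   definite on the hyperplane 1^perp. By compactness the quadratic form attains its maximum mu on
   the unit sphere of 1^perp; the first-order condition makes the maximiser an eigenvector of D for
   mu < 0, and every eigenvector for a nonzero eigenvalue lies in 1^perp, so all nonzero eigenvalues
   are at most mu. Finally 0 is a simple root of the characteristic polynomial: in a basis starting
   with 1 the first column of D vanishes, and the remaining block is nonsingular because the kernel
   of D is spanned by 1. So the eigenvalues in decreasing order begin with 0, mu. *)

lemma ones_vec_carrier [simp]: "ones_vec n \<in> carrier_vec n"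
  by (simp add: ones_vec_def)

lemma ones_mat_carrier [simp]: "ones_mat n \<in> carrier_mat n n"
  by (simp add: ones_mat_def)

lemma index_ones_mat [simp]: "i < n \<Longrightarrow> j < n \<Longrightarrow> ones_mat n $$ (i, j) = 1"
  and dim_row_ones_mat [simp]: "dim_row (ones_mat n) = n"
  and dim_col_ones_mat [simp]: "dim_col (ones_mat n) = n"
  by (simp_all add: ones_mat_def)

lemma row_ones_mat [simp]: "i < n \<Longrightarrow> row (ones_mat n) i = ones_vec n"
  and col_ones_mat [simp]: "j < n \<Longrightarrow> col (ones_mat n) j = ones_vec n"
  by (auto simp: ones_mat_def ones_vec_def)

lemma index_ones_vec [simp]: "i < n \<Longrightarrow> ones_vec n $ i = 1"
  and dim_ones_vec [simp]: "dim_vec (ones_vec n) = n"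
  by (simp_all add: ones_vec_def)

lemma scalar_prod_ones_vec_self: "ones_vec n \<bullet> ones_vec n = real n"
  by (simp add: ones_vec_def scalar_prod_def)

lemma ones_mat_mult_vec:
  assumes "v \<in> carrier_vec n"
  shows "ones_mat n *\<^sub>v v = (ones_vec n \<bullet> v) \<cdot>\<^sub>v ones_vec n"
  using assms by (intro eq_vecI) (auto simp: ones_mat_def ones_vec_def scalar_prod_def)

lemma smult_mat_mult_vec:
  assumes "A \<in> carrier_mat nr nc" "v \<in> carrier_vec nc"
  shows "(a \<cdot>\<^sub>m A) *\<^sub>v v = a \<cdot>\<^sub>v (A *\<^sub>v v)"
  using assms by (intro eq_vecI) (auto simp: scalar_prod_def sum_distrib_left mult.assoc)

lemma scalar_prod_self_nonneg: "0 \<le> (v :: real vec) \<bullet> v"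
  using conjugate_square_ge_0_vec[of v] by simp

lemma scalar_prod_self_eq_0_iff: "(v :: real vec) \<in> carrier_vec n \<Longrightarrow> v \<bullet> v = 0 \<longleftrightarrow> v = 0\<^sub>v n"
  using conjugate_square_eq_0_vec[of v n] by simp

lemma scalar_prod_self_pos: "(v :: real vec) \<in> carrier_vec n \<Longrightarrow> v \<noteq> 0\<^sub>v n \<Longrightarrow> 0 < v \<bullet> v"
  using conjugate_square_greater_0_vec[of v n] by simp

lemma square_index_le_scalar_prod_self:
  fixes y :: "real vec"
  assumes "y \<in> carrier_vec n" "i < n"
  shows "(y $ i)\<^sup>2 \<le> y \<bullet> y"
proof -
  have "(\<Sum>j\<in>{i}. y $ j * y $ j) \<le> (\<Sum>j\<in>{0..<n}. y $ j * y $ j)"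
    using assms(2) by (intro sum_mono2) auto
  then show ?thesis
    using assms by (simp add: scalar_prod_def power2_eq_square)
qed

lemma vec_restrict_index: "y \<in> carrier_vec n \<Longrightarrow> vec n (restrict (($) y) {..<n}) = y"
  by (intro eq_vecI) auto

lemma symmetric_bilinear_form:
  fixes M :: "'a :: comm_semiring_0 mat"
  assumes M: "M \<in> carrier_mat n n" "transpose_mat M = M" and x: "x \<in> carrier_vec n" and y: "y \<in> carrier_vec n"
  shows "x \<bullet> (M *\<^sub>v y) = y \<bullet> (M *\<^sub>v x)"
proof -
  have "x \<bullet> (M *\<^sub>v y) = (M *\<^sub>v x) \<bullet> y"
    using transpose_vec_mult_scalar[OF M(1) y x] M(2) by simp
  also have "\<dots> = y \<bullet> (M *\<^sub>v x)"
    using M(1) x y by (simp add: comm_scalar_prod[of _ n])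
  finally show ?thesis .
qed

lemma quadratic_form_add_smult:
  fixes M :: "real mat"
  assumes M: "M \<in> carrier_mat n n" "transpose_mat M = M" and x: "x \<in> carrier_vec n" and y: "y \<in> carrier_vec n"
  shows "(x + t \<cdot>\<^sub>v y) \<bullet> (M *\<^sub>v (x + t \<cdot>\<^sub>v y))
    = x \<bullet> (M *\<^sub>v x) + 2 * t * (y \<bullet> (M *\<^sub>v x)) + t\<^sup>2 * (y \<bullet> (M *\<^sub>v y))"
proof -
  have "M *\<^sub>v (x + t \<cdot>\<^sub>v y) = M *\<^sub>v x + t \<cdot>\<^sub>v (M *\<^sub>v y)"
    using M x y by (simp add: mult_add_distrib_mat_vec[of _ n n] mult_mat_vec[of _ n n])
  then have "(x + t \<cdot>\<^sub>v y) \<bullet> (M *\<^sub>v (x + t \<cdot>\<^sub>v y))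
      = x \<bullet> (M *\<^sub>v x) + t * (x \<bullet> (M *\<^sub>v y)) + t * (y \<bullet> (M *\<^sub>v x)) + t * (t * (y \<bullet> (M *\<^sub>v y)))"
    using M x y by (simp add: add_scalar_prod_distrib[of _ n] scalar_prod_add_distrib[of _ n] ring_distribs)
  moreover have "x \<bullet> (M *\<^sub>v y) = y \<bullet> (M *\<^sub>v x)" by (rule symmetric_bilinear_form[OF M x y])
  ultimately show ?thesis by (simp add: power2_eq_square ring_distribs)
qed

lemma scalar_prod_add_smult_self:
  fixes x y :: "real vec"
  assumes x: "x \<in> carrier_vec n" and y: "y \<in> carrier_vec n"
  shows "(x + t \<cdot>\<^sub>v y) \<bullet> (x + t \<cdot>\<^sub>v y) = x \<bullet> x + 2 * t * (y \<bullet> x) + t\<^sup>2 * (y \<bullet> y)"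
  using quadratic_form_add_smult[of "1\<^sub>m n" n x y t] x y by simp

lemma linear_coeff_nonpos_if_quadratic_nonpos:
  fixes a b :: real
  assumes "\<And>t. 2 * t * a + t\<^sup>2 * b \<le> 0"
  shows "a \<le> 0"
proof (rule ccontr)
  assume "\<not> a \<le> 0"
  then have a: "a > 0" by simp
  define t where "t = a / (\<bar>b\<bar> + 1)"
  have t: "t > 0" using a by (simp add: t_def add_pos_nonneg)
  have "t * \<bar>b\<bar> < a" using a by (simp add: t_def field_simps)
  moreover have "t * (- \<bar>b\<bar>) \<le> t * b"
    using t by (intro mult_left_mono) auto
  ultimately have "0 < t * (2 * a + t * b)"
    using t a by (intro mult_pos_pos) linarith+
  with assms[of t] show False by (simp add: algebra_simps power2_eq_square)
qed

definition sym_part :: "real mat \<Rightarrow> real mat" where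
  "sym_part A = (1/2) \<cdot>\<^sub>m (A + transpose_mat A)"

lemma sym_part_carrier: "A \<in> carrier_mat n n \<Longrightarrow> sym_part A \<in> carrier_mat n n"
  by (simp add: sym_part_def)

lemma transpose_sym_part: "A \<in> carrier_mat n n \<Longrightarrow> transpose_mat (sym_part A) = sym_part A"
  by (auto simp: sym_part_def)

lemma quadratic_form_sym_part:
  assumes A: "A \<in> carrier_mat n n" and x: "x \<in> carrier_vec n"
  shows "x \<bullet> (sym_part A *\<^sub>v x) = x \<bullet> (A *\<^sub>v x)"
proof -
  have "sym_part A *\<^sub>v x = (1/2) \<cdot>\<^sub>v (A *\<^sub>v x + transpose_mat A *\<^sub>v x)"
    unfolding sym_part_def using A x
    by (simp add: smult_mat_mult_vec[of _ n n] add_mult_distrib_mat_vec[of A n n])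
  moreover have "x \<bullet> (transpose_mat A *\<^sub>v x) = x \<bullet> (A *\<^sub>v x)"
    using transpose_vec_mult_scalar[OF A x x] A x by (simp add: comm_scalar_prod[of x n])
  ultimately show ?thesis
    using A x by (simp add: scalar_prod_add_distrib[of x n])
qed

definition double_centering :: "nat \<Rightarrow> real mat \<Rightarrow> real mat" where
  "double_centering n B = B - (1 / real n) \<cdot>\<^sub>m (B * ones_mat n)
     - (1 / real n) \<cdot>\<^sub>m (ones_mat n * B)
     + ((ones_vec n \<bullet> (B *\<^sub>v ones_vec n)) / (real n)^2) \<cdot>\<^sub>m ones_mat n"

lemma double_centering_carrier:
  "B \<in> carrier_mat n n \<Longrightarrow> double_centering n B \<in> carrier_mat n n"
  by (simp add: double_centering_def)

lemma double_centering_mult_vec: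
  assumes B: "B \<in> carrier_mat n n" and v: "v \<in> carrier_vec n"
  shows "double_centering n B *\<^sub>v v = B *\<^sub>v v
     - (1 / real n) \<cdot>\<^sub>v (B *\<^sub>v (ones_mat n *\<^sub>v v))
     - (1 / real n) \<cdot>\<^sub>v (ones_mat n *\<^sub>v (B *\<^sub>v v))
     + ((ones_vec n \<bullet> (B *\<^sub>v ones_vec n)) / (real n)^2) \<cdot>\<^sub>v (ones_mat n *\<^sub>v v)"
proof -
  let ?a = "1 / real n" and ?c = "(ones_vec n \<bullet> (B *\<^sub>v ones_vec n)) / (real n)^2"
  have BJ: "B * ones_mat n \<in> carrier_mat n n" by (rule mult_carrier_mat[OF B ones_mat_carrier])
  have JB: "ones_mat n * B \<in> carrier_mat n n" by (rule mult_carrier_mat[OF ones_mat_carrier B])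
  have C1: "B - ?a \<cdot>\<^sub>m (B * ones_mat n) \<in> carrier_mat n n"
    by (rule minus_carrier_mat[OF smult_carrier_mat[OF BJ]])
  have C2: "B - ?a \<cdot>\<^sub>m (B * ones_mat n) - ?a \<cdot>\<^sub>m (ones_mat n * B) \<in> carrier_mat n n"
    by (rule minus_carrier_mat[OF smult_carrier_mat[OF JB]])
  have "double_centering n B *\<^sub>v v
      = (B - ?a \<cdot>\<^sub>m (B * ones_mat n) - ?a \<cdot>\<^sub>m (ones_mat n * B)) *\<^sub>v v + (?c \<cdot>\<^sub>m ones_mat n) *\<^sub>v v"
    unfolding double_centering_def by (rule add_mult_distrib_mat_vec[OF C2 _ v]) simp
  also have "(B - ?a \<cdot>\<^sub>m (B * ones_mat n) - ?a \<cdot>\<^sub>m (ones_mat n * B)) *\<^sub>v v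
      = (B - ?a \<cdot>\<^sub>m (B * ones_mat n)) *\<^sub>v v - (?a \<cdot>\<^sub>m (ones_mat n * B)) *\<^sub>v v"
    by (rule minus_mult_distrib_mat_vec[OF C1 _ v]) (use JB in simp)
  also have "(B - ?a \<cdot>\<^sub>m (B * ones_mat n)) *\<^sub>v v = B *\<^sub>v v - (?a \<cdot>\<^sub>m (B * ones_mat n)) *\<^sub>v v"
    by (rule minus_mult_distrib_mat_vec[OF B _ v]) (use BJ in simp)
  finally show ?thesis
    by (simp add: smult_mat_mult_vec[OF BJ v] smult_mat_mult_vec[OF JB v] smult_mat_mult_vec[OF ones_mat_carrier v]
        assoc_mult_mat_vec[OF B ones_mat_carrier v] assoc_mult_mat_vec[OF ones_mat_carrier B v])
qed

lemma double_centering_mult_ones: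
  assumes B: "B \<in> carrier_mat n n"
  shows "double_centering n B *\<^sub>v ones_vec n = 0\<^sub>v n"
  using B
  by (intro eq_vecI)
    (auto simp: double_centering_mult_vec ones_mat_mult_vec scalar_prod_ones_vec_self mult_mat_vec[of _ n n]
       power2_eq_square field_simps)

lemma quadratic_form_double_centering:
  assumes B: "B \<in> carrier_mat n n" and v: "v \<in> carrier_vec n" and v1: "ones_vec n \<bullet> v = 0"
  shows "v \<bullet> (double_centering n B *\<^sub>v v) = v \<bullet> (B *\<^sub>v v)"
proof -
  have "v \<bullet> ones_vec n = 0" using v v1 by (simp add: comm_scalar_prod[of v n])
  then show ?thesis
    using B v v1 by (simp add: double_centering_mult_vec ones_mat_mult_vec add_scalar_prod_distrib[of _ n]
      scalar_prod_add_distrib[of _ n] scalar_prod_minus_distrib[of _ n] mult_mat_vec[of B n n])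
qed

lemma transpose_double_centering:
  assumes B: "B \<in> carrier_mat n n" "transpose_mat B = B"
  shows "transpose_mat (double_centering n B) = double_centering n B"
proof -
  have "row B i \<bullet> ones_vec n = ones_vec n \<bullet> col B i" if "i < n" for i
  proof -
    have "row B i = col B i" using col_transpose[of i B] B that by simp
    then show ?thesis using B that by (simp add: comm_scalar_prod[of _ n])
  qed
  moreover have "B $$ (j, i) = B $$ (i, j)" if "i < n" "j < n" for i j
    using index_transpose_mat(1)[of i B j] B that by simp
  ultimately show ?thesis
    using B by (intro eq_matI) (auto simp: double_centering_def)
qed

lemma continuous_map_scalar_prod_vec:
  assumes "c \<in> carrier_vec n"
  shows "continuous_map (product_topology (\<lambda>_. euclideanreal) {..<n}) euclideanreal (\<lambda>h. c \<bullet> vec n h)"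
proof -
  have "(\<lambda>h. c \<bullet> vec n h) = (\<lambda>h. \<Sum>i<n. c $ i * h i)"
    using assms by (auto simp: scalar_prod_def lessThan_atLeast0 intro!: sum.cong)
  moreover have "continuous_map (product_topology (\<lambda>_. euclideanreal) {..<n}) euclideanreal
      (\<lambda>h. \<Sum>i<n. c $ i * h i)"
    by (intro continuous_intros) auto
  ultimately show ?thesis by simp
qed

lemma continuous_map_quadratic_form_vec:
  assumes "M \<in> carrier_mat n n"
  shows "continuous_map (product_topology (\<lambda>_. euclideanreal) {..<n}) euclideanreal
    (\<lambda>h. vec n h \<bullet> (M *\<^sub>v vec n h))"
proof -
  have "(\<lambda>h. vec n h \<bullet> (M *\<^sub>v vec n h)) = (\<lambda>h. \<Sum>i<n. h i * (\<Sum>j<n. M $$ (i, j) * h j))"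
    using assms by (auto simp: scalar_prod_def lessThan_atLeast0 intro!: sum.cong)
  moreover have "continuous_map (product_topology (\<lambda>_. euclideanreal) {..<n}) euclideanreal
      (\<lambda>h. \<Sum>i<n. h i * (\<Sum>j<n. M $$ (i, j) * h j))"
    by (intro continuous_intros) auto
  ultimately show ?thesis by simp
qed

lemma compactin_hyperplane_unit_sphere:
  assumes c: "c \<in> carrier_vec n"
  shows "compactin (product_topology (\<lambda>_. euclideanreal) {..<n})
    {h \<in> PiE {..<n} (\<lambda>_. {-1..1::real}). c \<bullet> vec n h = 0 \<and> vec n h \<bullet> vec n h = 1}"
proof -
  let ?X = "product_topology (\<lambda>_. euclideanreal) {..<n}"
  have "continuous_map ?X euclideanreal (\<lambda>h. vec n h \<bullet> vec n h)"
    using continuous_map_quadratic_form_vec[OF one_carrier_mat[of n]] by simp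
  moreover have "compactin ?X (PiE {..<n} (\<lambda>_. {-1..1::real}))"
    by (simp add: compactin_PiE)
  ultimately have "compactin ?X (PiE {..<n} (\<lambda>_. {-1..1::real})
      \<inter> {h \<in> topspace ?X. c \<bullet> vec n h \<in> {0}} \<inter> {h \<in> topspace ?X. vec n h \<bullet> vec n h \<in> {1}})"
    by (intro compact_Int_closedin closedin_continuous_map_preimage
        closedin_continuous_map_preimage[OF continuous_map_scalar_prod_vec[OF c]]) auto
  moreover have "PiE {..<n} (\<lambda>_. {-1..1::real})
      \<inter> {h \<in> topspace ?X. c \<bullet> vec n h \<in> {0}} \<inter> {h \<in> topspace ?X. vec n h \<bullet> vec n h \<in> {1}}
    = {h \<in> PiE {..<n} (\<lambda>_. {-1..1::real}). c \<bullet> vec n h = 0 \<and> vec n h \<bullet> vec n h = 1}"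
    using PiE_mono[of "{..<n}" "\<lambda>_. {-1..1::real}" "\<lambda>_. UNIV"] by auto
  ultimately show ?thesis by simp
qed

lemma quadratic_form_attains_max_on_hyperplane:
  fixes M :: "real mat"
  assumes M: "M \<in> carrier_mat n n" and c: "c \<in> carrier_vec n"
    and x0: "x0 \<in> carrier_vec n" "c \<bullet> x0 = 0" "x0 \<noteq> 0\<^sub>v n"
  shows "\<exists>x\<in>carrier_vec n. c \<bullet> x = 0 \<and> x \<bullet> x = 1 \<and>
    (\<forall>y\<in>carrier_vec n. c \<bullet> y = 0 \<longrightarrow> y \<bullet> (M *\<^sub>v y) \<le> (x \<bullet> (M *\<^sub>v x)) * (y \<bullet> y))"
proof -
  define q where "q h = vec n h \<bullet> (M *\<^sub>v vec n h)" for h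
  define K where "K = {h \<in> PiE {..<n} (\<lambda>_. {-1..1::real}). c \<bullet> vec n h = 0 \<and> vec n h \<bullet> vec n h = 1}"
  have "compact (q ` K)"
    using image_compactin[OF compactin_hyperplane_unit_sphere[OF c] continuous_map_quadratic_form_vec[OF M]]
      compactin_euclidean_iff
    unfolding q_def K_def by blast
  have normalized_in_K: "restrict (($) ((1 / sqrt (y \<bullet> y)) \<cdot>\<^sub>v y)) {..<n} \<in> K"
    and normalized_q: "q (restrict (($) ((1 / sqrt (y \<bullet> y)) \<cdot>\<^sub>v y)) {..<n}) = (y \<bullet> (M *\<^sub>v y)) / (y \<bullet> y)"
    if y: "y \<in> carrier_vec n" "c \<bullet> y = 0" "y \<noteq> 0\<^sub>v n" for y
  proof -
    define u where "u = (1 / sqrt (y \<bullet> y)) \<cdot>\<^sub>v y"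
    have pos: "0 < y \<bullet> y" using scalar_prod_self_pos[OF y(1,3)] .
    have u: "u \<in> carrier_vec n" "c \<bullet> u = 0" "u \<bullet> u = 1"
      using y pos by (auto simp: u_def scalar_prod_smult_distrib[OF c y(1)])
    then have "\<bar>u $ i\<bar> \<le> 1" if "i < n" for i
      using square_index_le_scalar_prod_self[OF u(1) that] by (simp add: abs_square_le_1)
    then show "restrict (($) u) {..<n} \<in> K"
      using u by (auto simp: K_def vec_restrict_index abs_le_iff)
    show "q (restrict (($) u) {..<n}) = (y \<bullet> (M *\<^sub>v y)) / (y \<bullet> y)"
      using M y pos by (simp add: q_def vec_restrict_index u_def mult_mat_vec[of M n n])
  qed
  then have "q ` K \<noteq> {}" using normalized_in_K[OF x0] by blast
  with \<open>compact (q ` K)\<close> obtain s where "s \<in> q ` K" and s_max: "\<forall>t\<in>q ` K. t \<le> s"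
    using compact_attains_sup by blast
  then obtain h where h: "h \<in> K" "s = q h" by blast
  show ?thesis
  proof (intro bexI conjI ballI impI)
    show x: "vec n h \<in> carrier_vec n" "c \<bullet> vec n h = 0" "vec n h \<bullet> vec n h = 1"
      using h by (auto simp: K_def)
    fix y assume y: "y \<in> carrier_vec n" "c \<bullet> y = 0"
    show "y \<bullet> (M *\<^sub>v y) \<le> (vec n h \<bullet> (M *\<^sub>v vec n h)) * (y \<bullet> y)"
    proof (cases "y = 0\<^sub>v n")
      case False
      then have "(y \<bullet> (M *\<^sub>v y)) / (y \<bullet> y) \<le> q h"
        using s_max normalized_in_K[OF y False] normalized_q[OF y False] h(2) by force
      then show ?thesis
        using scalar_prod_self_pos[OF y(1) False] by (simp add: q_def divide_le_eq mult.commute)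
    qed (use M in simp)
  qed
qed

lemma max_quadratic_form_eigenvector:
  fixes M :: "real mat"
  assumes M: "M \<in> carrier_mat n n" "transpose_mat M = M"
    and c: "c \<in> carrier_vec n" "M *\<^sub>v c = 0\<^sub>v n"
    and x: "x \<in> carrier_vec n" "c \<bullet> x = 0"
    and max: "\<And>y. y \<in> carrier_vec n \<Longrightarrow> c \<bullet> y = 0 \<Longrightarrow> y \<bullet> (M *\<^sub>v y) \<le> mu * (y \<bullet> y)"
    and attained: "x \<bullet> (M *\<^sub>v x) = mu * (x \<bullet> x)"
  shows "M *\<^sub>v x = mu \<cdot>\<^sub>v x"
proof -
  define y where "y = M *\<^sub>v x - mu \<cdot>\<^sub>v x"
  have y: "y \<in> carrier_vec n" using M x by (simp add: y_def)
  have "c \<bullet> (M *\<^sub>v x) = 0"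
    using symmetric_bilinear_form[OF M c(1) x(1)] c x by simp
  then have cy: "c \<bullet> y = 0"
    using M c x by (simp add: y_def scalar_prod_minus_distrib[of _ n])
  have yMx: "y \<bullet> (M *\<^sub>v x) = y \<bullet> y + mu * (y \<bullet> x)"
    using M x y by (simp add: y_def scalar_prod_minus_distrib[of _ n] comm_scalar_prod[of y n])
  \<comment> \<open>first-order optimality: perturb x along y inside the hyperplane\<close>
  have "2 * t * (y \<bullet> y) + t\<^sup>2 * (y \<bullet> (M *\<^sub>v y) - mu * (y \<bullet> y)) \<le> 0" for t
  proof -
    have "c \<bullet> (x + t \<cdot>\<^sub>v y) = 0"
      using c x y cy by (simp add: scalar_prod_add_distrib[of _ n])
    then have "(x + t \<cdot>\<^sub>v y) \<bullet> (M *\<^sub>v (x + t \<cdot>\<^sub>v y)) \<le> mu * ((x + t \<cdot>\<^sub>v y) \<bullet> (x + t \<cdot>\<^sub>v y))"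
      using max x y by simp
    moreover have "(x + t \<cdot>\<^sub>v y) \<bullet> (M *\<^sub>v (x + t \<cdot>\<^sub>v y)) - mu * ((x + t \<cdot>\<^sub>v y) \<bullet> (x + t \<cdot>\<^sub>v y))
      = 2 * t * (y \<bullet> y) + t\<^sup>2 * (y \<bullet> (M *\<^sub>v y) - mu * (y \<bullet> y))"
      unfolding quadratic_form_add_smult[OF M x(1) y] scalar_prod_add_smult_self[OF x(1) y] attained yMx
      by (simp add: ring_distribs)
    ultimately show ?thesis by linarith
  qed
  then have "y \<bullet> y \<le> 0" by (rule linear_coeff_nonpos_if_quadratic_nonpos)
  then have "y = 0\<^sub>v n"
    using scalar_prod_self_nonneg[of y] scalar_prod_self_eq_0_iff[OF y] by simp
  have "(M *\<^sub>v x) $ i = mu * x $ i" if "i < n" for i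
  proof -
    have "y $ i = 0" using \<open>y = 0\<^sub>v n\<close> that by simp
    then show ?thesis using that M x by (simp add: y_def)
  qed
  then show ?thesis using M x by (intro eq_vecI) auto
qed

lemma eigenvalue_le_max_quadratic_form:
  fixes M :: "real mat"
  assumes M: "M \<in> carrier_mat n n" "transpose_mat M = M"
    and c: "c \<in> carrier_vec n" "M *\<^sub>v c = 0\<^sub>v n"
    and max: "\<And>y. y \<in> carrier_vec n \<Longrightarrow> c \<bullet> y = 0 \<Longrightarrow> y \<bullet> (M *\<^sub>v y) \<le> mu * (y \<bullet> y)"
    and lam: "eigenvalue M lam" "lam \<noteq> 0"
  shows "lam \<le> mu"
proof -
  obtain v where v: "v \<in> carrier_vec n" "v \<noteq> 0\<^sub>v n" "M *\<^sub>v v = lam \<cdot>\<^sub>v v"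
    using lam(1) M unfolding eigenvalue_def eigenvector_def by auto
  have "lam * (c \<bullet> v) = c \<bullet> (M *\<^sub>v v)" using v c by simp
  also have "\<dots> = v \<bullet> (M *\<^sub>v c)" by (rule symmetric_bilinear_form[OF M c(1) v(1)])
  finally have "c \<bullet> v = 0" using c v lam(2) by simp
  then have "lam * (v \<bullet> v) \<le> mu * (v \<bullet> v)" using max[OF v(1)] v by simp
  then show ?thesis using scalar_prod_self_pos[OF v(1,2)] by simp
qed

lemma ones_vec_basis_change:
  assumes n: "0 < n"
  obtains S T :: "real mat" where "S \<in> carrier_mat n n" "T \<in> carrier_mat n n"
    "S * T = 1\<^sub>m n" "T * S = 1\<^sub>m n" "S *\<^sub>v unit_vec n 0 = ones_vec n"
    "\<And>w. w \<in> carrier_vec n \<Longrightarrow> w $ 0 = 0 \<Longrightarrow> S *\<^sub>v w = w"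
proof -
  define S :: "real mat" where "S = mat n n (\<lambda>(i, j). if j = 0 \<or> i = j then 1 else 0)"
  have S: "S \<in> carrier_mat n n" by (simp add: S_def)
  have "det S = prod_list (diag_mat S)"
    by (rule det_lower_triangular[OF _ S]) (simp add: S_def)
  also have "diag_mat S = replicate n 1"
    by (intro nth_equalityI) (auto simp: diag_mat_def S_def)
  finally have "det S = 1" by simp
  then obtain T where T: "T \<in> carrier_mat n n" "T * S = 1\<^sub>m n" "S * T = 1\<^sub>m n"
    using det_non_zero_imp_unit[OF S, of undefined] by (auto simp: Units_def ring_mat_def)
  have S_e0: "S *\<^sub>v unit_vec n 0 = ones_vec n"
    using n by (intro eq_vecI) (auto simp: S_def)
  have S_fix: "S *\<^sub>v w = w" if w: "w \<in> carrier_vec n" "w $ 0 = 0" for w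
  proof (rule eq_vecI)
    fix i assume i: "i < dim_vec w"
    have "(S *\<^sub>v w) $ i = (\<Sum>j\<in>{0..<n}. (if j = 0 \<or> i = j then 1 else 0) * w $ j)"
      using S w i by (simp add: S_def scalar_prod_def)
    also have "\<dots> = (\<Sum>j\<in>{0..<n}. if j = i then w $ j else 0)"
      using w by (intro sum.cong) auto
    finally show "(S *\<^sub>v w) $ i = w $ i" using w i by simp
  qed (use S w in simp)
  show ?thesis by (rule that[OF S T(1) T(3) T(2) S_e0 S_fix])
qed

lemma mult_vec_vCons_0_mat_delete_kernel:
  fixes B :: "'a :: semiring_1 mat"
  assumes B: "B \<in> carrier_mat (Suc m) (Suc m)" and z: "z \<in> carrier_vec m"
    and Bz: "mat_delete B 0 0 *\<^sub>v z = 0\<^sub>v m"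
  shows "B *\<^sub>v vCons 0 z = (B *\<^sub>v vCons 0 z) $ 0 \<cdot>\<^sub>v unit_vec (Suc m) 0"
proof (rule eq_vecI)
  fix i assume "i < dim_vec ((B *\<^sub>v vCons 0 z) $ 0 \<cdot>\<^sub>v unit_vec (Suc m) 0)"
  then have i: "i < Suc m" by simp
  show "(B *\<^sub>v vCons 0 z) $ i = ((B *\<^sub>v vCons 0 z) $ 0 \<cdot>\<^sub>v unit_vec (Suc m) 0) $ i"
  proof (cases i)
    case (Suc i')
    have "row B i = vCons (B $$ (i, 0)) (row (mat_delete B 0 0) i')"
      using B i Suc by (intro eq_vecI) (auto simp: mat_delete_def vec_index_vCons)
    moreover have "(mat_delete B 0 0 *\<^sub>v z) $ i' = 0" using Bz i Suc by simp
    ultimately show ?thesis using B z i Suc by (simp add: mat_delete_carrier)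
  qed simp
qed (use B in simp)

lemma smult_ones_in_range_eq_0:
  fixes M :: "real mat"
  assumes M: "M \<in> carrier_mat n n" "transpose_mat M *\<^sub>v ones_vec n = 0\<^sub>v n"
    and w: "w \<in> carrier_vec n" "M *\<^sub>v w = k \<cdot>\<^sub>v ones_vec n" and n: "0 < n"
  shows "k = 0"
proof -
  have "0 = (transpose_mat M *\<^sub>v ones_vec n) \<bullet> w" using M(2) w by simp
  also have "\<dots> = ones_vec n \<bullet> (M *\<^sub>v w)" using M(1) w by (simp add: transpose_vec_mult_scalar)
  also have "\<dots> = k * (ones_vec n \<bullet> ones_vec n)" using w by simp
  also have "\<dots> = k * real n" by (simp only: scalar_prod_ones_vec_self)
  finally show ?thesis using n by simp
qed

lemma cond_neg_def_kernel_span_ones: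
  fixes M :: "real mat"
  assumes M: "M \<in> carrier_mat n n" "M *\<^sub>v ones_vec n = 0\<^sub>v n" and neg: "cond_neg_def n M"
    and u: "u \<in> carrier_vec n" "M *\<^sub>v u = 0\<^sub>v n"
  shows "\<exists>t. u = t \<cdot>\<^sub>v ones_vec n"
proof (cases "n = 0")
  case True
  then show ?thesis using u by (auto intro!: exI[of _ 0] eq_vecI)
next
  case False
  define t where "t = (ones_vec n \<bullet> u) / real n"
  define p where "p = u - t \<cdot>\<^sub>v ones_vec n"
  have p: "p \<in> carrier_vec n" using u by (simp add: p_def)
  have "ones_vec n \<bullet> p = 0"
    using u False by (simp add: p_def t_def scalar_prod_minus_distrib[of _ n] scalar_prod_ones_vec_self)
  moreover have "M *\<^sub>v p = 0\<^sub>v n"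
    using M u by (intro eq_vecI) (simp_all add: p_def mult_minus_distrib_mat_vec[of _ n n] mult_mat_vec[of _ n n])
  ultimately have "p = 0\<^sub>v n"
    using neg p unfolding cond_neg_def_def by force
  have "u $ i = t" if "i < n" for i
  proof -
    have "p $ i = 0" using \<open>p = 0\<^sub>v n\<close> that by simp
    then show ?thesis using u that by (simp add: p_def)
  qed
  then have "u = t \<cdot>\<^sub>v ones_vec n" using u by (intro eq_vecI) auto
  then show ?thesis by blast
qed

lemma similar_mat_zero_first_column:
  fixes M :: "real mat"
  assumes M: "M \<in> carrier_mat n n" and n: "0 < n" and M1: "M *\<^sub>v ones_vec n = 0\<^sub>v n"
  obtains S B where "S \<in> carrier_mat n n" "B \<in> carrier_mat n n" "similar_mat M B" "M * S = S * B"
    "S *\<^sub>v unit_vec n 0 = ones_vec n" "\<And>w. w \<in> carrier_vec n \<Longrightarrow> w $ 0 = 0 \<Longrightarrow> S *\<^sub>v w = w"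
    "\<And>i. i < n \<Longrightarrow> B $$ (i, 0) = 0"
proof -
  obtain S T where S: "S \<in> carrier_mat n n" and T: "T \<in> carrier_mat n n"
    and ST: "S * T = 1\<^sub>m n" and TS: "T * S = 1\<^sub>m n" and S_e0: "S *\<^sub>v unit_vec n 0 = ones_vec n"
    and S_fix: "\<And>w. w \<in> carrier_vec n \<Longrightarrow> w $ 0 = 0 \<Longrightarrow> S *\<^sub>v w = w"
    using ones_vec_basis_change[OF n] by blast
  define B where "B = T * M * S"
  have B: "B \<in> carrier_mat n n" using S T M by (simp add: B_def)
  have "S * B = S * (T * (M * S))" using S T M by (simp add: B_def)
  also have "\<dots> = (S * T) * (M * S)" using assoc_mult_mat[OF S T mult_carrier_mat[OF M S]] by simp
  finally have MS: "M * S = S * B" using S M ST by simp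
  have "S * B * T = M * (S * T)" using S T M B by (simp add: MS[symmetric])
  then have "S * B * T = M" using M ST by simp
  then have sim: "similar_mat M B"
    unfolding similar_mat_def using S T M B ST TS by (metis similar_mat_witI)
  have B0: "B $$ (i, 0) = 0" if "i < n" for i
  proof -
    have "B *\<^sub>v unit_vec n 0 = T *\<^sub>v (M *\<^sub>v ones_vec n)"
      using S T M by (simp add: B_def S_e0 assoc_mult_mat_vec[of _ n n _ n])
    also have "\<dots> = 0\<^sub>v n" using T M1 by (intro eq_vecI) auto
    finally have "B *\<^sub>v unit_vec n 0 = 0\<^sub>v n" .
    moreover have "(B *\<^sub>v unit_vec n 0) $ i = B $$ (i, 0)" using B that n by simp
    ultimately show ?thesis using that by simp
  qed
  show ?thesis by (rule that[OF S B sim MS S_e0 S_fix B0])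
qed

lemma char_poly_simple_root_0:
  fixes M :: "real mat"
  assumes M: "M \<in> carrier_mat n n" and n: "0 < n"
    and M1: "M *\<^sub>v ones_vec n = 0\<^sub>v n" and MT1: "transpose_mat M *\<^sub>v ones_vec n = 0\<^sub>v n"
    and ker: "\<And>u. u \<in> carrier_vec n \<Longrightarrow> M *\<^sub>v u = 0\<^sub>v n \<Longrightarrow> \<exists>t. u = t \<cdot>\<^sub>v ones_vec n"
  shows "\<exists>q. char_poly M = [:0, 1:] * q \<and> poly q 0 \<noteq> 0"
proof -
  obtain m where m: "n = Suc m" using n by (cases n) auto
  obtain S B where S: "S \<in> carrier_mat n n" and B: "B \<in> carrier_mat n n" and sim: "similar_mat M B"
    and MS: "M * S = S * B" and S_e0: "S *\<^sub>v unit_vec n 0 = ones_vec n"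
    and S_fix: "\<And>w. w \<in> carrier_vec n \<Longrightarrow> w $ 0 = 0 \<Longrightarrow> S *\<^sub>v w = w"
    and B0: "\<And>i. i < n \<Longrightarrow> B $$ (i, 0) = 0"
    using similar_mat_zero_first_column[OF M n M1] by blast
  have "char_poly M = char_poly B" by (rule char_poly_similar[OF sim])
  also have "\<dots> = monom 1 1 * char_poly (mat_delete B 0 0)" by (rule char_poly_0_column[OF B0 B n])
  finally have cp: "char_poly M = [:0, 1:] * char_poly (mat_delete B 0 0)" by (simp add: x_as_monom)
  \<comment> \<open>a kernel vector z of the deleted block lifts to w = (0, z) with M w a multiple of 1;
    since 1 is orthogonal to the range of M, w lies in the kernel of M, hence w = 0\<close>
  have "poly (char_poly (mat_delete B 0 0)) 0 \<noteq> 0"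
  proof
    assume "poly (char_poly (mat_delete B 0 0)) 0 = 0"
    moreover have B3: "mat_delete B 0 0 \<in> carrier_mat m m"
      using mat_delete_carrier[OF B, of 0 0] m by simp
    ultimately have "eigenvalue (mat_delete B 0 0) 0"
      using eigenvalue_root_char_poly[OF B3] by simp
    then obtain z where z: "z \<in> carrier_vec m" "z \<noteq> 0\<^sub>v m" "mat_delete B 0 0 *\<^sub>v z = 0 \<cdot>\<^sub>v z"
      using carrier_matD[OF B3] unfolding eigenvalue_def eigenvector_def by auto
    have "0 \<cdot>\<^sub>v z = 0\<^sub>v m" using z(1) by (intro eq_vecI) auto
    then have Bw: "B *\<^sub>v vCons 0 z = (B *\<^sub>v vCons 0 z) $ 0 \<cdot>\<^sub>v unit_vec n 0"
      using mult_vec_vCons_0_mat_delete_kernel[of B m z] B z m by simp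
    define w where "w = vCons 0 z"
    define k where "k = (B *\<^sub>v w) $ 0"
    have w: "w \<in> carrier_vec n" "w $ 0 = 0" using z m by (simp_all add: w_def)
    have "M *\<^sub>v w = (M * S) *\<^sub>v w" using M S w S_fix by simp
    also have "\<dots> = S *\<^sub>v (k \<cdot>\<^sub>v unit_vec n 0)" using S B w Bw by (simp add: MS w_def k_def)
    also have "\<dots> = k \<cdot>\<^sub>v ones_vec n" using S by (simp add: mult_mat_vec[OF S] S_e0)
    finally have Mw: "M *\<^sub>v w = k \<cdot>\<^sub>v ones_vec n" .
    then have "k = 0" by (rule smult_ones_in_range_eq_0[OF M MT1 w(1) _ n])
    then have "M *\<^sub>v w = 0\<^sub>v n" using Mw by (intro eq_vecI) auto
    then obtain t where t: "w = t \<cdot>\<^sub>v ones_vec n" using ker w(1) by blast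
    then have "t = 0" using w n by simp
    then have "w = 0\<^sub>v n" using t by (intro eq_vecI) auto
    then show False using z m by (simp add: w_def zero_vec_Suc)
  qed
  then show ?thesis using cp by blast
qed

lemma sorted_list_of_multiset_add_mset_upper_bound:
  fixes Q :: "'a :: linorder multiset"
  assumes "\<forall>x\<in>#Q. x \<le> b"
  shows "sorted_list_of_multiset (add_mset b Q) = sorted_list_of_multiset Q @ [b]"
proof -
  have "sorted (sorted_list_of_multiset Q @ [b])" using assms by (simp add: sorted_append)
  moreover have "mset (sorted_list_of_multiset Q @ [b]) = add_mset b Q" by simp
  ultimately show ?thesis by (metis sorted_list_of_multiset_mset sorted_sort_id)
qed

lemma second_largest_add_mset:
  fixes Q :: "'a :: linorder multiset"
  assumes "\<forall>x\<in>#Q. x \<le> mu" "mu \<in># Q" "mu < a"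
  shows "rev (sorted_list_of_multiset (add_mset a Q)) ! 1 = mu"
proof -
  obtain Q' where Q: "Q = add_mset mu Q'" using assms(2) by (metis multi_member_split)
  have "sorted_list_of_multiset Q = sorted_list_of_multiset Q' @ [mu]"
    unfolding Q by (rule sorted_list_of_multiset_add_mset_upper_bound) (use assms(1) Q in auto)
  moreover have "sorted_list_of_multiset (add_mset a Q) = sorted_list_of_multiset Q @ [a]"
    by (rule sorted_list_of_multiset_add_mset_upper_bound) (use assms(1,3) in force)
  ultimately show ?thesis by simp
qed

lemma eigenvalues_desc_second:
  fixes M :: "real mat"
  assumes M: "M \<in> carrier_mat n n"
    and cp: "char_poly M = [:0, 1:] * q" "poly q 0 \<noteq> 0"
    and mu: "eigenvalue M mu" "mu < 0"
    and le: "\<And>lam. eigenvalue M lam \<Longrightarrow> lam \<noteq> 0 \<Longrightarrow> lam \<le> mu"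
  shows "eigenvalues_desc M ! 1 = mu"
proof -
  have q: "q \<noteq> 0" using cp(2) by auto
  have root: "eigenvalue M lam \<longleftrightarrow> lam = 0 \<or> poly q lam = 0" for lam
    using eigenvalue_root_char_poly[OF M] cp(1) by simp
  have "proots (char_poly M) = proots [:0, 1:] + proots q"
    unfolding cp(1) by (rule proots_mult) (use q in auto)
  also have "proots [:0, 1:] = {#0 :: real#}"
    using proots_linear_factor[of "0 :: real"] by simp
  finally have "proots (char_poly M) = add_mset 0 (proots q)" by simp
  moreover have "\<forall>lam\<in>#proots q. lam \<le> mu"
    using q cp(2) root le by auto
  moreover have "mu \<in># proots q" using q mu root by simp
  ultimately show ?thesis
    unfolding eigenvalues_desc_def using second_largest_add_mset mu(2) by metis
qed

lemma scalar_prod_ones_vec_comm: "x \<in> carrier_vec n \<Longrightarrow> x \<bullet> ones_vec n = ones_vec n \<bullet> x"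
  by (simp add: comm_scalar_prod[of x n])

lemma divide_scalar_prod_self_iff:
  fixes x :: "real vec"
  assumes "x \<in> carrier_vec n" "x \<noteq> 0\<^sub>v n"
  shows "a / (x \<bullet> x) = c \<longleftrightarrow> a = c * (x \<bullet> x)" and "a / (x \<bullet> x) \<le> c \<longleftrightarrow> a \<le> c * (x \<bullet> x)"
  using scalar_prod_self_pos[OF assms] by (simp_all add: divide_eq_eq pos_divide_le_eq)

lemma eigenvalues_desc_second_max_quadratic_form:
  fixes M :: "real mat"
  assumes n: "2 \<le> n" and M: "M \<in> carrier_mat n n" "transpose_mat M = M"
    and M1: "M *\<^sub>v ones_vec n = 0\<^sub>v n" and neg: "cond_neg_def n M"
  defines "lam2 \<equiv> eigenvalues_desc M ! 1"
  shows "\<exists>x\<in>carrier_vec n. ones_vec n \<bullet> x = 0 \<and> x \<noteq> 0\<^sub>v n \<and> x \<bullet> (M *\<^sub>v x) = lam2 * (x \<bullet> x)"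
    and "\<And>y. y \<in> carrier_vec n \<Longrightarrow> ones_vec n \<bullet> y = 0 \<Longrightarrow> y \<bullet> (M *\<^sub>v y) \<le> lam2 * (y \<bullet> y)"
    and "lam2 < 0"
proof -
  define x0 :: "real vec" where "x0 = unit_vec n 0 - unit_vec n 1"
  have "x0 $ 0 = 1" using n by (simp add: x0_def)
  then have "x0 \<noteq> 0\<^sub>v n" using n by auto
  moreover have "x0 \<in> carrier_vec n" "ones_vec n \<bullet> x0 = 0"
    using n by (auto simp: x0_def scalar_prod_minus_distrib[of _ n])
  ultimately have x0: "x0 \<in> carrier_vec n" "ones_vec n \<bullet> x0 = 0" "x0 \<noteq> 0\<^sub>v n" by blast+
  obtain x where x: "x \<in> carrier_vec n" "ones_vec n \<bullet> x = 0" "x \<bullet> x = 1"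
    and max: "\<forall>y\<in>carrier_vec n. ones_vec n \<bullet> y = 0 \<longrightarrow> y \<bullet> (M *\<^sub>v y) \<le> (x \<bullet> (M *\<^sub>v x)) * (y \<bullet> y)"
    using quadratic_form_attains_max_on_hyperplane[OF M(1) ones_vec_carrier x0] by blast
  define mu where "mu = x \<bullet> (M *\<^sub>v x)"
  have mu_max: "\<And>y. y \<in> carrier_vec n \<Longrightarrow> ones_vec n \<bullet> y = 0 \<Longrightarrow> y \<bullet> (M *\<^sub>v y) \<le> mu * (y \<bullet> y)"
    using max unfolding mu_def by blast
  have x_nz: "x \<noteq> 0\<^sub>v n" using x by auto
  have mu_neg: "mu < 0" using neg x x_nz unfolding cond_neg_def_def mu_def by blast
  have "M *\<^sub>v x = mu \<cdot>\<^sub>v x"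
    using max_quadratic_form_eigenvector[OF M ones_vec_carrier M1 x(1,2) mu_max] x(3) mu_def by simp
  then have mu_eig: "eigenvalue M mu"
    using M x x_nz unfolding eigenvalue_def eigenvector_def by auto
  have "transpose_mat M *\<^sub>v ones_vec n = 0\<^sub>v n" using M M1 by simp
  moreover have "0 < n" using n by simp
  ultimately obtain q where "char_poly M = [:0, 1:] * q" "poly q 0 \<noteq> 0"
    using char_poly_simple_root_0[OF M(1) _ M1 _ cond_neg_def_kernel_span_ones[OF M(1) M1 neg]] by blast
  then have lam2: "lam2 = mu"
    unfolding lam2_def
    by (rule eigenvalues_desc_second[OF M(1) _ _ mu_eig mu_neg
          eigenvalue_le_max_quadratic_form[OF M ones_vec_carrier M1 mu_max]])
  show "\<exists>x\<in>carrier_vec n. ones_vec n \<bullet> x = 0 \<and> x \<noteq> 0\<^sub>v n \<and> x \<bullet> (M *\<^sub>v x) = lam2 * (x \<bullet> x)"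
    using x x_nz lam2 unfolding mu_def by auto
  show "\<And>y. y \<in> carrier_vec n \<Longrightarrow> ones_vec n \<bullet> y = 0 \<Longrightarrow> y \<bullet> (M *\<^sub>v y) \<le> lam2 * (y \<bullet> y)"
    using mu_max lam2 by blast
  show "lam2 < 0" using lam2 mu_neg by simp
qed

theorem lemma2p1:
  fixes n :: nat and A :: "real mat"
  assumes "n \<ge> 2" and "A \<in> carrier_mat n n" and "cond_neg_def n A"
  defines "Abar \<equiv> (1/2) \<cdot>\<^sub>m (A + transpose_mat A)"
  defines "D \<equiv> Abar - (1 / real n) \<cdot>\<^sub>m (Abar * ones_mat n)
                 - (1 / real n) \<cdot>\<^sub>m (ones_mat n * Abar)
                 + ((ones_vec n \<bullet> (A *\<^sub>v ones_vec n)) / (real n)^2) \<cdot>\<^sub>m ones_mat n"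
  defines "lam2 \<equiv> eigenvalues_desc D ! 1"
  shows "(\<exists>x \<in> carrier_vec n. x \<bullet> ones_vec n = 0 \<and> x \<noteq> 0\<^sub>v n \<and>
            (x \<bullet> (A *\<^sub>v x)) / (x \<bullet> x) = lam2)
       \<and> (\<forall>x \<in> carrier_vec n. x \<bullet> ones_vec n = 0 \<and> x \<noteq> 0\<^sub>v n \<longrightarrow>
            (x \<bullet> (A *\<^sub>v x)) / (x \<bullet> x) \<le> lam2)
       \<and> lam2 < 0"
proof -
  note A = assms(2)
  have "Abar = sym_part A" by (simp add: Abar_def sym_part_def)
  then have D: "D = double_centering n (sym_part A)"
    using quadratic_form_sym_part[OF A ones_vec_carrier] by (simp add: D_def double_centering_def)
  have D_A: "x \<bullet> (D *\<^sub>v x) = x \<bullet> (A *\<^sub>v x)" if "x \<in> carrier_vec n" "ones_vec n \<bullet> x = 0" for x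
    using that A by (simp add: D quadratic_form_double_centering sym_part_carrier quadratic_form_sym_part)
  have "cond_neg_def n D" using assms(3) D_A unfolding cond_neg_def_def by simp
  then have ex: "\<exists>x\<in>carrier_vec n. ones_vec n \<bullet> x = 0 \<and> x \<noteq> 0\<^sub>v n \<and> x \<bullet> (D *\<^sub>v x) = lam2 * (x \<bullet> x)"
    and bound: "\<And>y. y \<in> carrier_vec n \<Longrightarrow> ones_vec n \<bullet> y = 0 \<Longrightarrow> y \<bullet> (D *\<^sub>v y) \<le> lam2 * (y \<bullet> y)"
    and "lam2 < 0"
    using eigenvalues_desc_second_max_quadratic_form[OF assms(1), of D] A unfolding lam2_def
    by (simp_all add: D double_centering_carrier sym_part_carrier transpose_double_centering
        transpose_sym_part double_centering_mult_ones)
  show ?thesis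
  proof (intro conjI ballI impI)
    from ex obtain x where x: "x \<in> carrier_vec n" "ones_vec n \<bullet> x = 0" "x \<noteq> 0\<^sub>v n"
      "x \<bullet> (D *\<^sub>v x) = lam2 * (x \<bullet> x)" by blast
    then show "\<exists>x\<in>carrier_vec n. x \<bullet> ones_vec n = 0 \<and> x \<noteq> 0\<^sub>v n \<and> (x \<bullet> (A *\<^sub>v x)) / (x \<bullet> x) = lam2"
      using D_A[OF x(1,2)] divide_scalar_prod_self_iff(1)[OF x(1,3)] scalar_prod_ones_vec_comm[OF x(1)] by auto
  next
    fix x assume "x \<in> carrier_vec n" "x \<bullet> ones_vec n = 0 \<and> x \<noteq> 0\<^sub>v n"
    then show "(x \<bullet> (A *\<^sub>v x)) / (x \<bullet> x) \<le> lam2"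
      using bound D_A divide_scalar_prod_self_iff(2) scalar_prod_ones_vec_comm by simp
  qed fact
qed

end
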